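(* Let $Q_k^A,Q_k^B$ be the SDQ iterates and $w_k^A,w_k^B$ the associated noise vectors (see context). Let $Q_k^{\mathrm{err}_U}$ and $Q_k^{\mathrm{err}_{UL}}$ be defined by \[ Q_{k+1}^{\mathrm{err}_U}=(I+\alpha\gamma DP\Pi_{Q_k^{\mathrm{err}_U}}-\alpha D)Q_k^{\mathrm{err}_U}+\alpha w_k^A-\alpha w_k^B,\qquad Q_{k+1}^{\mathrm{err}_{UL}}=(I+\alpha\gamma DP\Pi_{Q^*}-\alpha D)Q_k^{\mathrm{err}_{UL}}+\alpha w_k^A-\alpha w_k^B, \] with initial vectors $Q_0^{\mathrm{err}_U},Q_0^{\mathrm{err}_{UL}}\in\mathbb{R}^{|\mathcal{S}||\mathcal{A}|}$. If $Q_0^{\mathrm{err}_U}\ge Q_0^{\mathrm{err}_{UL}}$ element-wise, then $Q_k^{\mathrm{err}_U}\ge Q_k^{\mathrm{err}_{UL}}$ element-wise for all $k\ge0$.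
   Context: Finite MDP with states $\mathcal{S}=\{1,\dots,|\mathcal{S}|\}$, actions $\mathcal{A}=\{1,\dots,|\mathcal{A}|\}$, transitions $P(s'|s,a)$, bounded deterministic reward $r(s,a,s')$, discount $\gamma\in(0,1)$, optimal action-value function $Q^*$. Sampling distribution $d(s,a)>0$ on $\mathcal{S}\times\mathcal{A}$; at iteration $k$, $(s_k,a_k)\sim d$ i.i.d., $s_k'\sim P(\cdot|s_k,a_k)$, $r_{k+1}=r(s_k,a_k,s_k')$. Constant step-size $\alpha\in(0,1)$. SDQ: only entry $(s_k,a_k)$ is updated, $Q_{k+1}^A(s_k,a_k)=Q_k^A(s_k,a_k)+\alpha\{r_{k+1}+\gamma Q_k^A(s_k',\arg\max_aQ_k^B(s_k',a))-Q_k^A(s_k,a_k)\}$ and symmetrically for $B$ with roles of $A,B$ swapped. Vector notation: $Q\in\mathbb{R}^{|\mathcal{S}||\mathcal{A}|}$ stacks $Q(\cdot,1),\dots,Q(\cdot,|\mathcal{A}|)$, so $Q(s,a)=(e_a\otimes e_s)^TQ$. $D$ is the diagonal matrix with entry $d(s,a)$ at position $(s,a)$. $P\in\mathbb{R}^{|\mathcal{S}||\mathcal{A}|\times|\mathcal{S}|}$ has row $(s,a)$ equal to $P(\cdot|s,a)$. $R(s,a)=\mathbb{E}[r(s,a,s')|s,a]$. For $Q$, $\pi_Q(s)=\arg\max_aQ(s,a)$ (fixed tie-breaking) and $\Pi_Q\in\mathbb{R}^{|\mathcal{S}|\times|\mathcal{S}||\mathcal{A}|}$ has $s$-th row $e_{\pi_Q(s)}^T\otimes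 e_s^T$. Noise: $w_k^A=(e_{a_k}\otimes e_{s_k})r_{k+1}+\gamma(e_{a_k}\otimes e_{s_k})e_{s_k'}^T\Pi_{Q_k^B}Q_k^A-(e_{a_k}\otimes e_{s_k})(e_{a_k}\otimes e_{s_k})^TQ_k^A-(DR+\gamma DP\Pi_{Q_k^B}Q_k^A-DQ_k^A)$, and $w_k^B$ is the same with $A$ and $B$ swapped. *)

theory Defs
  imports Complex_Main
begin

text \<open>Vectors in R^{|S||A|} are functions on state-action pairs. Actions carry a
linear order, used as the fixed tie-breaking rule of the greedy policy (smallest maximiser).\<close>

type_synonym ('s, 'a) qvec = "'s \<times> 'a \<Rightarrow> real"

definition greedy :: "('s, 'a::{finite,linorder}) qvec \<Rightarrow> 's \<Rightarrow> 'a" where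
  "greedy Q s = (LEAST a. \<forall>b. Q (s, b) \<le> Q (s, a))"

definition PiMat :: "('s, 'a::{finite,linorder}) qvec \<Rightarrow> ('s, 'a) qvec \<Rightarrow> 's \<Rightarrow> real" where
  "PiMat Q X s = X (s, greedy Q s)"

definition PMat :: "('s::finite \<times> 'a \<Rightarrow> 's \<Rightarrow> real) \<Rightarrow> ('s \<Rightarrow> real) \<Rightarrow> ('s, 'a) qvec" where
  "PMat P v x = (\<Sum>s'\<in>UNIV. P x s' * v s')"

definition DMat :: "('s \<times> 'a \<Rightarrow> real) \<Rightarrow> ('s, 'a) qvec \<Rightarrow> ('s, 'a) qvec" where
  "DMat d X x = d x * X x"

definition expReward :: "('s::finite \<times> 'a \<Rightarrow> 's \<Rightarrow> real) \<Rightarrow> ('s \<Rightarrow> 'a \<Rightarrow> 's \<Rightarrow> real) \<Rightarrow> ('s, 'a) qvec" where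
  "expReward P r x = (\<Sum>s'\<in>UNIV. P x s' * r (fst x) (snd x) s')"

definition Qstar :: "('s::finite \<times> 'a::{finite,linorder} \<Rightarrow> 's \<Rightarrow> real) \<Rightarrow> ('s \<Rightarrow> 'a \<Rightarrow> 's \<Rightarrow> real)
     \<Rightarrow> real \<Rightarrow> ('s, 'a) qvec" where
  "Qstar P r \<gamma> = (THE Q. \<forall>x. Q x = expReward P r x
       + \<gamma> * (\<Sum>s'\<in>UNIV. P x s' * (MAX a\<in>UNIV. Q (s', a))))"

text \<open>SDQ iterates along a sample path (s_k, a_k, s'_k): returns the pair (Q_k^A, Q_k^B).\<close>
primrec SDQ :: "real \<Rightarrow> real \<Rightarrow> ('s \<Rightarrow> 'a \<Rightarrow> 's \<Rightarrow> real) \<Rightarrow> (nat \<Rightarrow> 's) \<Rightarrow> (nat \<Rightarrow> 'a)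
    \<Rightarrow> (nat \<Rightarrow> 's) \<Rightarrow> ('s, 'a::{finite,linorder}) qvec \<Rightarrow> ('s, 'a) qvec \<Rightarrow> nat
    \<Rightarrow> ('s, 'a) qvec \<times> ('s, 'a) qvec" where
  "SDQ \<alpha> \<gamma> r sk ak sk' QA0 QB0 0 = (QA0, QB0)"
| "SDQ \<alpha> \<gamma> r sk ak sk' QA0 QB0 (Suc k) =
     (let (QA, QB) = SDQ \<alpha> \<gamma> r sk ak sk' QA0 QB0 k;
          x = (sk k, ak k); rw = r (sk k) (ak k) (sk' k)
      in (QA(x := QA x + \<alpha> * (rw + \<gamma> * QA (sk' k, greedy QB (sk' k)) - QA x)),
          QB(x := QB x + \<alpha> * (rw + \<gamma> * QB (sk' k, greedy QA (sk' k)) - QB x))))"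

text \<open>Noise vector w for the pair (Q1, Q2) = (Q_k^A, Q_k^B) gives w_k^A;
 (Q_k^B, Q_k^A) gives w_k^B.  Here (e_{a_k} \<otimes> e_{s_k}) is the indicator of (s_k,a_k).\<close>
definition noise :: "('s::finite \<times> 'a::{finite,linorder} \<Rightarrow> 's \<Rightarrow> real) \<Rightarrow> ('s \<Rightarrow> 'a \<Rightarrow> 's \<Rightarrow> real)
    \<Rightarrow> ('s \<times> 'a \<Rightarrow> real) \<Rightarrow> real \<Rightarrow> 's \<Rightarrow> 'a \<Rightarrow> 's \<Rightarrow> ('s, 'a) qvec \<Rightarrow> ('s, 'a) qvec
    \<Rightarrow> ('s, 'a) qvec" where
  "noise P r d \<gamma> s a s' Q1 Q2 x =
     (if x = (s, a) then r s a s' + \<gamma> * PiMat Q2 Q1 s' - Q1 (s, a) else 0)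
     - (DMat d (expReward P r) x + \<gamma> * DMat d (PMat P (PiMat Q2 Q1)) x - DMat d Q1 x)"

text \<open>Generic error recursion
  E_{k+1} = (I + alpha gamma D P Pi_{M_k} - alpha D) E_k + alpha u_k,
 where M_k is the matrix-selecting vector used at step k.\<close>
primrec errSeq :: "(('s, 'a) qvec \<Rightarrow> ('s, 'a) qvec) \<Rightarrow> ('s::finite \<times> 'a::{finite,linorder} \<Rightarrow> 's \<Rightarrow> real)
    \<Rightarrow> ('s \<times> 'a \<Rightarrow> real) \<Rightarrow> real \<Rightarrow> real \<Rightarrow> (nat \<Rightarrow> ('s, 'a) qvec) \<Rightarrow> ('s, 'a) qvec
    \<Rightarrow> nat \<Rightarrow> ('s, 'a) qvec" where
  "errSeq sel P d \<alpha> \<gamma> u E0 0 = E0"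
| "errSeq sel P d \<alpha> \<gamma> u E0 (Suc k) =
     (let E = errSeq sel P d \<alpha> \<gamma> u E0 k in
      (\<lambda>x. E x + \<alpha> * \<gamma> * DMat d (PMat P (PiMat (sel E) E)) x - \<alpha> * DMat d E x + \<alpha> * u k x))"

end

theory Submission
  imports Defs
begin

text \<open>Both recursions are driven by the same noise, so it cancels in the comparison. What remains
  is that the upper update is monotone, because the diagonal part \<open>1 - \<alpha> d(s,a)\<close> is
  nonnegative and \<open>P\<close> is a nonnegative matrix, and that evaluating the greedy policy of \<open>E\<close>
  on \<open>E\<close> dominates evaluating any other policy on it: \<open>\<Pi>\<^sub>E E \<ge> \<Pi>\<^sub>M E\<close> for every \<open>M\<close>.\<close>

lemma le_greedy:
  fixes Q :: "('s, 'a::{finite,linorder}) qvec"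
  shows "Q (s, b) \<le> Q (s, greedy Q s)"
proof -
  let ?maximisers = "{a. \<forall>b. Q (s, b) \<le> Q (s, a)}"
  have "?maximisers \<noteq> {}"
    using Max_ge[of "range (\<lambda>a. Q (s, a))"] Max_in[of "range (\<lambda>a. Q (s, a))"] by fastforce
  then have "greedy Q s = Min ?maximisers"
    unfolding greedy_def by (intro Least_Min) auto
  moreover have "Min ?maximisers \<in> ?maximisers"
    using \<open>?maximisers \<noteq> {}\<close> by (rule Min_in[OF finite])
  ultimately show ?thesis by simp
qed

lemma PiMat_le_PiMat_greedy:
  assumes "\<And>x. L x \<le> U x"
  shows "PiMat M L s \<le> PiMat U U s"
  unfolding PiMat_def using assms le_greedy order_trans by metis

lemma PMat_mono:
  assumes "\<And>x s'. P x s' \<ge> 0" and "\<And>s. v s \<le> w s"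
  shows "PMat P v x \<le> PMat P w x"
  unfolding PMat_def using assms by (intro sum_mono mult_left_mono) auto

lemma errSeq_Suc_apply:
  "errSeq sel P d \<alpha> \<gamma> u E0 (Suc k) x =
     (1 - \<alpha> * d x) * errSeq sel P d \<alpha> \<gamma> u E0 k x
     + \<alpha> * \<gamma> * d x * PMat P (PiMat (sel (errSeq sel P d \<alpha> \<gamma> u E0 k)) (errSeq sel P d \<alpha> \<gamma> u E0 k)) x
     + \<alpha> * u k x"
  by (simp add: DMat_def Let_def algebra_simps)

lemma errSeq_le_errSeq_greedy:
  fixes P :: "'s::finite \<times> 'a::{finite,linorder} \<Rightarrow> 's \<Rightarrow> real"
  assumes P_nonneg: "\<And>x s'. P x s' \<ge> 0"
    and d_nonneg: "\<And>x. d x \<ge> 0" and step_le_one: "\<And>x. \<alpha> * d x \<le> 1"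
    and "\<alpha> \<ge> 0" "\<gamma> \<ge> 0"
    and init: "\<And>x. F0 x \<le> E0 x"
  shows "errSeq sel P d \<alpha> \<gamma> u F0 k x \<le> errSeq (\<lambda>E. E) P d \<alpha> \<gamma> u E0 k x"
proof (induction k arbitrary: x)
  case 0
  then show ?case using init by simp
next
  case (Suc k)
  define L where "L = errSeq sel P d \<alpha> \<gamma> u F0 k"
  define U where "U = errSeq (\<lambda>E. E) P d \<alpha> \<gamma> u E0 k"
  have IH: "\<And>x. L x \<le> U x"
    using Suc unfolding L_def U_def .
  have "(1 - \<alpha> * d x) * L x \<le> (1 - \<alpha> * d x) * U x"
    using IH step_le_one by (intro mult_left_mono) auto
  moreover have "PMat P (PiMat (sel L) L) x \<le> PMat P (PiMat U U) x"
    using P_nonneg PiMat_le_PiMat_greedy[OF IH] by (rule PMat_mono)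
  then have "\<alpha> * \<gamma> * d x * PMat P (PiMat (sel L) L) x \<le> \<alpha> * \<gamma> * d x * PMat P (PiMat U U) x"
    using d_nonneg \<open>\<alpha> \<ge> 0\<close> \<open>\<gamma> \<ge> 0\<close> by (intro mult_left_mono) auto
  ultimately show ?case
    unfolding errSeq_Suc_apply L_def[symmetric] U_def[symmetric] by simp
qed

theorem proposition4:
  fixes P :: "'s::finite \<times> 'a::{finite,linorder} \<Rightarrow> 's \<Rightarrow> real"
    and r :: "'s \<Rightarrow> 'a \<Rightarrow> 's \<Rightarrow> real"
    and d :: "'s \<times> 'a \<Rightarrow> real"
    and \<gamma> \<alpha> :: real
    and sk :: "nat \<Rightarrow> 's" and ak :: "nat \<Rightarrow> 'a" and sk' :: "nat \<Rightarrow> 's"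
    and QA0 QB0 EU0 EUL0 :: "('s, 'a) qvec"
  assumes P_nonneg: "\<And>x s'. P x s' \<ge> 0"
    and P_sum: "\<And>x. (\<Sum>s'\<in>UNIV. P x s') = 1"
    and d_pos: "\<And>x. d x > 0"
    and d_sum: "(\<Sum>x\<in>UNIV. d x) = 1"
    and gamma: "0 < \<gamma>" "\<gamma> < 1"
    and alpha: "0 < \<alpha>" "\<alpha> < 1"
    and path: "\<And>k. P (sk k, ak k) (sk' k) > 0"
    and init: "\<And>x. EU0 x \<ge> EUL0 x"
  defines "wA \<equiv> \<lambda>k. noise P r d \<gamma> (sk k) (ak k) (sk' k) (fst (SDQ \<alpha> \<gamma> r sk ak sk' QA0 QB0 k)) (snd (SDQ \<alpha> \<gamma> r sk ak sk' QA0 QB0 k))"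
    and "wB \<equiv> \<lambda>k. noise P r d \<gamma> (sk k) (ak k) (sk' k) (snd (SDQ \<alpha> \<gamma> r sk ak sk' QA0 QB0 k)) (fst (SDQ \<alpha> \<gamma> r sk ak sk' QA0 QB0 k))"
  shows "\<forall>k x. errSeq (\<lambda>E. E) P d \<alpha> \<gamma> (\<lambda>k x. wA k x - wB k x) EU0 k x
              \<ge> errSeq (\<lambda>E. Qstar P r \<gamma>) P d \<alpha> \<gamma> (\<lambda>k x. wA k x - wB k x) EUL0 k x"
proof (intro allI)
  fix k x
  have d_nonneg: "\<And>x. d x \<ge> 0"
    using d_pos less_imp_le by blast
  have "d y \<le> 1" for y
    using member_le_sum[of y UNIV d] d_nonneg d_sum by simp
  then have "\<alpha> * d y \<le> 1" for y
    using alpha d_nonneg[of y] by (simp add: mult_le_one)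
  then show "errSeq (\<lambda>E. Qstar P r \<gamma>) P d \<alpha> \<gamma> (\<lambda>k x. wA k x - wB k x) EUL0 k x
      \<le> errSeq (\<lambda>E. E) P d \<alpha> \<gamma> (\<lambda>k x. wA k x - wB k x) EU0 k x"
    using P_nonneg d_nonneg alpha gamma init by (intro errSeq_le_errSeq_greedy) auto
qed

end
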